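(* Let $p\ge 1$ be an integer and let $0<u\le v$ be real numbers with $uv=1$. Let $\mathcal{C}=\{A\in\mathbb{S}_{++}^p : uI_p\preceq A\preceq vI_p\}$. Then for every $\Omega_r\in\mathcal{C}$, \[ \mathcal{N}_{\mathcal{C}}(\Omega_r) = -\mathcal{N}_{\mathcal{C}}(\Omega_r^{-1}), \] where for $A\in\mathcal{C}$ the normal cone is $\mathcal{N}_{\mathcal{C}}(A)=\{B\in\mathbb{S}^p : \operatorname{tr}(B^T(Z-A))\le 0 \text{ for all } Z\in\mathcal{C}\}$.
   Context: $\mathbb{S}^p$ denotes the set of real symmetric $p\times p$ matrices, $\mathbb{S}_{++}^p$ the set of real symmetric positive definite $p\times p$ matrices, and $\preceq$ the Loewner order ($A\preceq B$ iff $B-A$ is positive semidefinite). For a set $S$ of matrices, $-S=\{-B : B\in S\}$. Note that $\Omega_r\in\mathcal{C}$ implies $\Omega_r^{-1}\in\mathcal{C}$ since $uv=1$. *)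

theory Defs
  imports "HOL-Analysis.Analysis"
begin

(* Real symmetric matrices S^p, with p = CARD('n) *)
definition sym_mat :: "real^'n^'n \<Rightarrow> bool" where
  "sym_mat A \<longleftrightarrow> transpose A = A"

definition psd :: "real^'n^'n \<Rightarrow> bool" where
  "psd A \<longleftrightarrow> sym_mat A \<and> (\<forall>x. 0 \<le> x \<bullet> (A *v x))"

definition pd :: "real^'n^'n \<Rightarrow> bool" where
  "pd A \<longleftrightarrow> sym_mat A \<and> (\<forall>x. x \<noteq> 0 \<longrightarrow> 0 < x \<bullet> (A *v x))"

definition loewner_le :: "real^'n^'n \<Rightarrow> real^'n^'n \<Rightarrow> bool" where
  "loewner_le A B \<longleftrightarrow> psd (B - A)"

definition Cset :: "real \<Rightarrow> real \<Rightarrow> (real^'n^'n) set" where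
  "Cset u v = {A. pd A \<and> loewner_le (u *\<^sub>R mat 1) A \<and> loewner_le A (v *\<^sub>R mat 1)}"

definition normal_cone :: "(real^'n^'n) set \<Rightarrow> real^'n^'n \<Rightarrow> (real^'n^'n) set" where
  "normal_cone C A = {B. sym_mat B \<and> (\<forall>Z\<in>C. trace (transpose B ** (Z - A)) \<le> 0)}"

end

theory Submission
  imports Defs
begin

(* Write l(X) = tr(B X) for symmetric B. Then B is normal to C at A iff A maximises l on C, and
   -B is normal at A^-1 iff A^-1 minimises l on C. As C is invariant under W |-> (u+v)I - W, the
   minimum of l on C is (u+v) l(I) - l(A). Because uv = 1, M = (u+v)I - A - A^-1 equals
   (A - uI)(vI - A)A^-1 and is positive semidefinite, and A - sM stays in C for s = u/(v-u)
   (if u = v, then C = {I} and M = 0). Maximality of A gives l(M) >= 0, that is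
   l(A^-1) <= (u+v) l(I) - l(A). The matrix inequalities are verified on quadratic forms of a
   self-adjoint operator f with u <= f <= v, so no diagonalisation is needed. *)

locale selfadjoint_bounded_below =
  fixes f :: "'a::real_inner \<Rightarrow> 'a" and u v :: real
  assumes linear: "linear f"
    and selfadjoint: "\<And>x y. f x \<bullet> y = x \<bullet> f y"
    and lower: "\<And>x. u * (x \<bullet> x) \<le> x \<bullet> f x"
    and pos: "0 < u"
    and reciprocal: "u * v = 1"
begin

lemma pos_v: "0 < v"
  using pos reciprocal by (metis zero_less_mult_pos zero_less_one)

lemma quadratic_form_combination:
  assumes "f y = x"
  shows "(a *\<^sub>R y + b *\<^sub>R x) \<bullet> f (a *\<^sub>R y + b *\<^sub>R x)
           = a * a * (x \<bullet> y) + 2 * a * b * (x \<bullet> x) + b * b * (x \<bullet> f x)"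
proof -
  have "y \<bullet> f x = x \<bullet> x" using selfadjoint[of y x] assms by simp
  then show ?thesis
    using assms by (simp add: linear_add[OF linear] linear_cmul[OF linear] inner_add_left
        inner_add_right inner_commute[of x y] algebra_simps)
qed

lemma inverse_quadratic_form_upper:
  assumes "f y = x"
  shows "x \<bullet> y \<le> v * (x \<bullet> x)"
proof -
  have "0 \<le> (x - u *\<^sub>R y) \<bullet> (x - u *\<^sub>R y) + u * (y \<bullet> f y - u * (y \<bullet> y))"
    using lower[of y] pos by simp
  also have "\<dots> = x \<bullet> x - u * (x \<bullet> y)"
    using assms by (simp add: inner_diff_left inner_diff_right inner_commute[of x y] algebra_simps)
  finally have "0 \<le> v * (x \<bullet> x - u * (x \<bullet> y))"
    using pos_v by simp
  also have "\<dots> = v * (x \<bullet> x) - x \<bullet> y"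
    using reciprocal by algebra
  finally show ?thesis by simp
qed

lemma quadratic_form_gap_bound:
  assumes "f y = x"
  shows "u * ((u + v) * (x \<bullet> x) - x \<bullet> f x - x \<bullet> y) \<le> (v - u) * (x \<bullet> f x - u * (x \<bullet> x))"
proof -
  define q where "q = (- u) *\<^sub>R y + 1 *\<^sub>R x"
  have "0 \<le> q \<bullet> f q"
    using lower[of q] pos by (meson inner_ge_zero mult_nonneg_nonneg order.trans less_imp_le)
  then have "0 \<le> v * (q \<bullet> f q)"
    using pos_v by simp
  also have "v * (q \<bullet> f q) = (v - u) * (x \<bullet> f x - u * (x \<bullet> x))
      - u * ((u + v) * (x \<bullet> x) - x \<bullet> f x - x \<bullet> y)"
    unfolding q_def quadratic_form_combination[OF assms] using reciprocal by algebra
  finally show ?thesis by simp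
qed

end

locale selfadjoint_pinched = selfadjoint_bounded_below +
  assumes upper: "\<And>x. x \<bullet> f x \<le> v * (x \<bullet> x)"
begin

lemma inverse_quadratic_form_lower:
  assumes "f y = x"
  shows "u * (x \<bullet> x) \<le> x \<bullet> y"
proof -
  have "0 \<le> u * ((v *\<^sub>R y + (- 1) *\<^sub>R x) \<bullet> (v *\<^sub>R y + (- 1) *\<^sub>R x))"
    using pos by simp
  also have "\<dots> \<le> (v *\<^sub>R y + (- 1) *\<^sub>R x) \<bullet> f (v *\<^sub>R y + (- 1) *\<^sub>R x)"
    by (rule lower)
  also have "\<dots> \<le> v * v * (x \<bullet> y) - 2 * v * (x \<bullet> x) + v * (x \<bullet> x)"
    unfolding quadratic_form_combination[OF assms] using upper[of x] by simp
  also have "\<dots> = v * (v * (x \<bullet> y) - x \<bullet> x)"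
    by algebra
  finally have "0 \<le> v * (x \<bullet> y) - x \<bullet> x"
    using pos_v by (simp add: zero_le_mult_iff)
  then have "0 \<le> u * (v * (x \<bullet> y) - x \<bullet> x)"
    using pos by simp
  also have "\<dots> = x \<bullet> y - u * (x \<bullet> x)"
    using reciprocal by algebra
  finally show ?thesis by simp
qed

(* On an eigenvector y with eigenvalue t, using p = (v - f) y and q = (f - u) y, this is
   (v - u) t (t - u) (v - t) = u (t - u) (v - t)^2 + v (v - t) (t - u)^2. *)
lemma quadratic_form_add_inverse_le:
  assumes "f y = x" and "u < v"
  shows "x \<bullet> f x + x \<bullet> y \<le> (u + v) * (x \<bullet> x)"
proof -
  define p where "p = v *\<^sub>R y + (- 1) *\<^sub>R x"
  define q where "q = (- u) *\<^sub>R y + 1 *\<^sub>R x"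
  have "0 \<le> u * (p \<bullet> f p - u * (p \<bullet> p)) + v * (v * (q \<bullet> q) - q \<bullet> f q)"
    using lower[of p] upper[of q] pos pos_v by simp
  also have "\<dots> = (v - u) * ((u + v) * (x \<bullet> x) - x \<bullet> f x - x \<bullet> y)"
    unfolding p_def q_def quadratic_form_combination[OF assms(1)]
    using reciprocal by (simp add: inner_diff_left inner_diff_right inner_commute[of x y]) algebra
  finally show ?thesis
    using assms(2) by (simp add: zero_le_mult_iff)
qed

end

lemma linear_minimiser_from_maximiser:
  fixes l :: "'a::real_vector \<Rightarrow> real"
  assumes "linear l"
    and maximiser: "\<And>Z. Z \<in> C \<Longrightarrow> l Z \<le> l A"
    and reflection: "\<And>W. W \<in> C \<Longrightarrow> c - W \<in> C"
    and step: "A - s *\<^sub>R (c - A - K) \<in> C" and "0 < s"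
    and "W \<in> C"
  shows "l K \<le> l W"
proof -
  have "l A - s * (l c - l A - l K) \<le> l A"
    using maximiser[OF step] by (simp add: linear_diff[OF \<open>linear l\<close>] linear_cmul[OF \<open>linear l\<close>])
  then have "l K \<le> l c - l A"
    using \<open>0 < s\<close> by (simp add: zero_le_mult_iff)
  also have "l c - l A \<le> l W"
    using maximiser[OF reflection[OF \<open>W \<in> C\<close>]] by (simp add: linear_diff[OF \<open>linear l\<close>])
  finally show ?thesis .
qed

lemma transpose_diff: "transpose (A - B) = transpose A - (transpose B :: 'a::ab_group_add^'n^'m)"
  by (simp add: transpose_def vec_eq_iff)

lemma sym_mat_diff: "sym_mat A \<Longrightarrow> sym_mat B \<Longrightarrow> sym_mat (A - B)"
  by (simp add: sym_mat_def transpose_diff)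

lemma sym_mat_scaleR: "sym_mat A \<Longrightarrow> sym_mat (c *\<^sub>R A)"
  by (simp add: sym_mat_def transpose_scalar)

lemma sym_mat_mat: "sym_mat (mat k)"
  by (simp add: sym_mat_def)

lemma sym_mat_inner: "sym_mat A \<Longrightarrow> (A *v x) \<bullet> y = x \<bullet> (A *v y)"
  by (metis dot_lmul_matrix sym_mat_def transpose_matrix_vector)

lemma sym_mat_quadratic_form_eq_0:
  fixes S :: "real^'n^'n"
  assumes "sym_mat S" and form: "\<And>x. x \<bullet> (S *v x) = 0"
  shows "S = 0"
proof (rule matrix_eq[THEN iffD2], intro allI)
  fix x :: "real^'n"
  define y where "y = S *v x"
  have "0 = (x + y) \<bullet> (S *v (x + y))"
    using form by simp
  also have "\<dots> = x \<bullet> (S *v y) + y \<bullet> (S *v x)"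
    using form[of x] form[of y] by (simp add: matrix_vector_right_distrib inner_add_left inner_add_right)
  also have "x \<bullet> (S *v y) = y \<bullet> (S *v x)"
    using sym_mat_inner[OF \<open>sym_mat S\<close>, of x y] by (simp add: inner_commute)
  finally show "S *v x = 0 *v x"
    by (simp add: y_def)
qed

lemma mem_Cset_iff:
  fixes A :: "real^'n^'n"
  assumes "0 < u"
  shows "A \<in> Cset u v \<longleftrightarrow> sym_mat A
    \<and> (\<forall>x. u * (x \<bullet> x) \<le> x \<bullet> (A *v x)) \<and> (\<forall>x. x \<bullet> (A *v x) \<le> v * (x \<bullet> x))"
proof -
  have "sym_mat (A - u *\<^sub>R mat 1) \<and> sym_mat (v *\<^sub>R mat 1 - A)" if "sym_mat A"
    using that by (intro conjI sym_mat_diff sym_mat_scaleR sym_mat_mat)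
  moreover have "0 < x \<bullet> (A *v x)" if "x \<noteq> 0" and "u * (x \<bullet> x) \<le> x \<bullet> (A *v x)" for x
    using that assms by (metis inner_gt_zero_iff mult_pos_pos order_less_le_trans)
  ultimately show ?thesis
    unfolding Cset_def pd_def loewner_le_def psd_def
    by (auto simp: matrix_vector_mult_diff_rdistrib scaleR_matrix_vector_assoc[symmetric]
        inner_diff_right)
qed

lemma selfadjoint_pinched_Cset:
  assumes "A \<in> Cset u v" and "0 < u" and "u * v = 1"
  shows "selfadjoint_pinched ((*v) A) u v"
  using assms sym_mat_inner
  by unfold_locales (auto simp: mem_Cset_iff matrix_vector_right_distrib matrix_vector_mult_scaleR)

lemma mem_Cset_1_1: "A \<in> Cset 1 1 \<Longrightarrow> A = mat 1"
  using sym_mat_quadratic_form_eq_0[of "A - mat 1"]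
  by (force simp: mem_Cset_iff sym_mat_diff sym_mat_mat matrix_vector_mult_diff_rdistrib
      inner_diff_right intro: order.antisym)

lemma invertible_if_pd:
  fixes A :: "real^'n^'n"
  assumes "pd A"
  shows "invertible A"
proof -
  have "A *v x = 0 \<Longrightarrow> x = 0" for x
    using assms unfolding pd_def by (metis inner_zero_right less_irrefl)
  then show ?thesis
    by (simp add: matrix_left_invertible_ker invertible_left_inverse)
qed

lemma matrix_mul_matrix_inv:
  assumes "invertible A"
  shows "A ** matrix_inv A = mat 1" and "matrix_inv A ** A = mat 1"
  using someI_ex[OF assms[unfolded invertible_def]] unfolding matrix_inv_def by auto

lemma matrix_inv_eqI:
  fixes A B :: "'a::comm_semiring_1^'n^'n"
  assumes "A ** B = mat 1" and "B ** A = mat 1"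
  shows "matrix_inv A = B"
proof -
  have inv: "invertible A"
    using assms invertible_def by blast
  have "B = (matrix_inv A ** A) ** B"
    by (simp add: matrix_mul_matrix_inv(2)[OF inv])
  also have "\<dots> = matrix_inv A"
    by (simp add: matrix_mul_assoc[symmetric] assms(1))
  finally show ?thesis ..
qed

lemma matrix_inv_matrix_inv:
  fixes A :: "'a::comm_semiring_1^'n^'n"
  shows "invertible A \<Longrightarrow> matrix_inv (matrix_inv A) = A"
  by (intro matrix_inv_eqI matrix_mul_matrix_inv)

lemma sym_mat_matrix_inv:
  assumes "sym_mat A" and "invertible A"
  shows "sym_mat (matrix_inv A)"
proof -
  have "matrix_inv A = transpose (matrix_inv A)"
    using matrix_mul_matrix_inv[OF \<open>invertible A\<close>] \<open>sym_mat A\<close>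
    by (intro matrix_inv_eqI) (metis matrix_transpose_mul sym_mat_def transpose_mat)+
  then show ?thesis
    by (simp add: sym_mat_def)
qed

lemma invertible_if_mem_Cset: "A \<in> Cset u v \<Longrightarrow> invertible A"
  by (simp add: Cset_def invertible_if_pd)

lemma matrix_inv_mem_Cset:
  fixes A :: "real^'n^'n"
  assumes A: "A \<in> Cset u v" and "0 < u" and "u * v = 1"
  shows "matrix_inv A \<in> Cset u v"
proof -
  interpret selfadjoint_pinched "(*v) A" u v
    using selfadjoint_pinched_Cset assms .
  have inv: "invertible A"
    using invertible_if_mem_Cset[OF A] .
  have "A *v (matrix_inv A *v x) = x" for x
    by (simp add: matrix_vector_mul_assoc matrix_mul_matrix_inv(1)[OF inv])
  then have "u * (x \<bullet> x) \<le> x \<bullet> (matrix_inv A *v x) \<and> x \<bullet> (matrix_inv A *v x) \<le> v * (x \<bullet> x)" for x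
    using inverse_quadratic_form_lower inverse_quadratic_form_upper by blast
  moreover have "sym_mat A"
    using A \<open>0 < u\<close> by (simp add: mem_Cset_iff)
  ultimately show ?thesis
    using \<open>0 < u\<close> sym_mat_matrix_inv[OF _ inv] by (simp add: mem_Cset_iff)
qed

lemma reflection_mem_Cset:
  fixes W :: "real^'n^'n"
  assumes "W \<in> Cset u v" and "0 < u"
  shows "(u + v) *\<^sub>R mat 1 - W \<in> Cset u v"
proof -
  have "sym_mat ((u + v) *\<^sub>R mat 1 - W)"
    using assms by (intro sym_mat_diff sym_mat_scaleR sym_mat_mat) (simp add: mem_Cset_iff)
  then show ?thesis
    using assms by (auto simp: mem_Cset_iff matrix_vector_mult_diff_rdistrib
        scaleR_matrix_vector_assoc[symmetric] inner_diff_right algebra_simps)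
qed

lemma step_mem_Cset:
  fixes A :: "real^'n^'n"
  assumes A: "A \<in> Cset u v" and "0 < u" and "u < v" and "u * v = 1"
  shows "A - (u / (v - u)) *\<^sub>R ((u + v) *\<^sub>R mat 1 - A - matrix_inv A) \<in> Cset u v"
proof -
  interpret selfadjoint_pinched "(*v) A" u v
    using selfadjoint_pinched_Cset A \<open>0 < u\<close> \<open>u * v = 1\<close> .
  define s where "s = u / (v - u)"
  define m where "m x = (u + v) * (x \<bullet> x) - x \<bullet> (A *v x) - x \<bullet> (matrix_inv A *v x)" for x
  define Z where "Z = A - s *\<^sub>R ((u + v) *\<^sub>R mat 1 - A - matrix_inv A)"
  have inv: "A *v (matrix_inv A *v x) = x" for x
    using invertible_if_mem_Cset[OF A] by (simp add: matrix_vector_mul_assoc matrix_mul_matrix_inv(1))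
  have form: "x \<bullet> (Z *v x) = x \<bullet> (A *v x) - s * m x" for x
    by (simp add: Z_def m_def matrix_vector_mult_diff_rdistrib scaleR_matrix_vector_assoc[symmetric]
        inner_diff_right algebra_simps)
  have "x \<bullet> (Z *v x) \<le> v * (x \<bullet> x)" for x
  proof -
    have "0 \<le> s * m x"
      using quadratic_form_add_inverse_le[OF inv \<open>u < v\<close>, of x] \<open>0 < u\<close> \<open>u < v\<close>
      unfolding s_def m_def by (intro mult_nonneg_nonneg divide_nonneg_nonneg) simp_all
    then show ?thesis
      using upper[of x] form[of x] by linarith
  qed
  moreover have "u * (x \<bullet> x) \<le> x \<bullet> (Z *v x)" for x
  proof -
    have "u * m x / (v - u) \<le> x \<bullet> (A *v x) - u * (x \<bullet> x)"
      using quadratic_form_gap_bound[OF inv, of x] \<open>u < v\<close>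
      by (simp add: m_def pos_divide_le_eq mult.commute)
    then show ?thesis
      using form[of x] by (simp add: s_def)
  qed
  moreover have "sym_mat Z"
    using A \<open>0 < u\<close> sym_mat_matrix_inv[OF _ invertible_if_mem_Cset[OF A]] unfolding Z_def
    by (intro sym_mat_diff sym_mat_scaleR sym_mat_mat) (auto simp: mem_Cset_iff)
  ultimately show ?thesis
    using \<open>0 < u\<close> by (simp add: mem_Cset_iff Z_def s_def)
qed

lemma linear_trace_matrix_mult: "linear (\<lambda>X. trace ((B :: real^'n^'n) ** X))"
  by (rule linearI) (simp_all add: matrix_add_ldistrib trace_add sum.distrib matrix_scalar_ac
      scalar_matrix_assoc[symmetric] trace_def sum_distrib_left)

lemma mem_normal_cone_iff:
  "B \<in> normal_cone C A \<longleftrightarrow> sym_mat B \<and> (\<forall>Z\<in>C. trace (B ** Z) \<le> trace (B ** A))"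
  by (auto simp: normal_cone_def sym_mat_def matrix_add_ldistrib trace_sub
      linear_diff[OF linear_trace_matrix_mult])

lemma ex_step_mem_Cset:
  fixes A :: "real^'n^'n"
  assumes A: "A \<in> Cset u v" and "0 < u" and "u \<le> v" and "u * v = 1"
  obtains s where "0 < s" and "A - s *\<^sub>R ((u + v) *\<^sub>R mat 1 - A - matrix_inv A) \<in> Cset u v"
proof (cases "u = v")
  case True
  then have "u = 1" "v = 1"
    using \<open>0 < u\<close> \<open>u * v = 1\<close> power2_eq_1_iff[of u] by (auto simp: power2_eq_square)
  then have "A = mat 1" "matrix_inv A = mat 1"
    using A mem_Cset_1_1 matrix_inv_eqI[of "mat 1" "mat 1"] by auto
  then have "(u + v) *\<^sub>R mat 1 - A - matrix_inv A = 0"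
    using \<open>u = 1\<close> \<open>v = 1\<close> by (simp add: vec_eq_iff mat_def)
  then show ?thesis
    using that[of 1] A by simp
next
  case False
  then show ?thesis
    using that[of "u / (v - u)"] step_mem_Cset[OF A \<open>0 < u\<close> _ \<open>u * v = 1\<close>] \<open>0 < u\<close> \<open>u \<le> v\<close>
    by simp
qed

lemma uminus_mem_normal_cone_matrix_inv:
  fixes A B :: "real^'n^'n"
  assumes "0 < u" and "u \<le> v" and "u * v = 1"
    and A: "A \<in> Cset u v" and B: "B \<in> normal_cone (Cset u v) A"
  shows "- B \<in> normal_cone (Cset u v) (matrix_inv A)"
proof -
  obtain s where "0 < s" and step: "A - s *\<^sub>R ((u + v) *\<^sub>R mat 1 - A - matrix_inv A) \<in> Cset u v"
    using ex_step_mem_Cset[OF A \<open>0 < u\<close> \<open>u \<le> v\<close> \<open>u * v = 1\<close>] .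
  have maximiser: "trace (B ** Z) \<le> trace (B ** A)" if "Z \<in> Cset u v" for Z
    using B that by (simp add: mem_normal_cone_iff)
  have "trace (B ** matrix_inv A) \<le> trace (B ** W)" if "W \<in> Cset u v" for W
    using linear_minimiser_from_maximiser[OF linear_trace_matrix_mult maximiser
        reflection_mem_Cset[OF _ \<open>0 < u\<close>] step \<open>0 < s\<close> that] .
  moreover have "trace ((- B) ** X) = - trace (B ** X)" for X
    by (simp add: matrix_matrix_mult_def trace_def sum_negf)
  moreover have "sym_mat (- B)"
    using B by (simp add: mem_normal_cone_iff sym_mat_def transpose_def vec_eq_iff)
  ultimately show ?thesis
    by (simp add: mem_normal_cone_iff)
qed

theorem lemma1:
  fixes u v :: real and Omega :: "real^'n^'n"
  assumes "0 < u" and "u \<le> v" and "u * v = 1"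
    and "Omega \<in> Cset u v"
  shows "normal_cone (Cset u v) Omega = uminus ` normal_cone (Cset u v) (matrix_inv Omega)"
proof
  show "normal_cone (Cset u v) Omega \<subseteq> uminus ` normal_cone (Cset u v) (matrix_inv Omega)"
    using uminus_mem_normal_cone_matrix_inv[OF assms] by (metis image_eqI minus_minus subsetI)
  have "matrix_inv Omega \<in> Cset u v"
    using matrix_inv_mem_Cset assms by blast
  then show "uminus ` normal_cone (Cset u v) (matrix_inv Omega) \<subseteq> normal_cone (Cset u v) Omega"
    using uminus_mem_normal_cone_matrix_inv[OF assms(1-3)]
      matrix_inv_matrix_inv[OF invertible_if_mem_Cset[OF assms(4)]] by fastforce
qed

end
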